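(* Let $X$ be a Banach space, let $A:\mathrm{D}(A)\subseteq X\to X$ be a sectorial operator (with constants $a\in\mathbb R$, $\phi\in(\pi/2,\pi)$, $K>0$ as in the context) generating the analytic semigroup $(T_t)_{t\ge 0}\subset L(X)$, and let $B:\mathrm{D}(B)\to X$ be a closed linear operator with $\mathrm{D}(A)\subseteq \mathrm{D}(B)$ and $B\,\mathrm{D}(A)\subseteq\mathrm{D}(A)$. Assume that the generalized nested commutators $\{B,A^m\}$ (defined in the context) are defined for all $m\in\mathbb Z_+$, that $\{B,A^m\}\mathrm{D}(A)\subseteq\mathrm{D}(A)$ for all $m\in\mathbb Z_+$, and that there exist constants $\eta>0$, $K_1>0$ such that $$\|\{B,A^{m}\}R_{A}(\lambda)\|_{L(X)}\le\frac{K_1\eta^m}{|\lambda-a|}\quad\text{for all } m\in\mathbb Z_+,\ \lambda\in\Sigma_{a,\phi}.$$ Then for every $t>0$ and every $x\in\mathrm{D}(A)$ the series below converges in $X$ and $$BT_tx=T_t\sum_{m=0}^{\infty}\frac{t^m}{m!}\{B,A^m\}x .$$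
   Context: $\mathbb Z_+$ denotes the non-negative integers; $L(X)$ the bounded linear operators on $X$; $R_A(\lambda)=(\lambda\,\mathrm{id}-A)^{-1}$ the resolvent and $\rho(A)$ the resolvent set. A closed densely defined operator $A$ is sectorial if for some $a\in\mathbb R$, $\phi\in(\pi/2,\pi)$ the sector $\Sigma_{a,\phi}:=\{\lambda\in\mathbb C\setminus\{a\}: |\arg(\lambda-a)|<\phi\}$ is contained in $\rho(A)$ and there is $K>0$ with $\|R_A(\lambda)\|\le K/|\lambda-a|$ for all $\lambda\in\Sigma_{a,\phi}$; such $A$ generates an analytic semigroup $(T_t)$. Generalized nested commutators are defined inductively: $\{B,A^0\}:=B$. If a linear operator $\{B,A^m\}$ with domain $\mathrm{D}(\{B,A^m\})\supseteq \mathrm{D}(A)$ is defined, set $\widehat{\mathrm D}:=\{x\in \mathrm{D}(A)\cap\mathrm{D}(\{B,A^m\}) : Ax\in\mathrm{D}(\{B,A^m\}),\ \{B,A^m\}x\in\mathrm{D}(A)\}$; it is required that $\widehat{\mathrm D}\supseteq\mathrm{D}(A)$ and that the operator $\widehat{\mathrm D}\ni x\mapsto \{B,A^m\}Ax-A\{B,A^m\}x$ be closable; its closure is $\{B,A^{m+1}\}$. "$\{B,A^m\}$ is defined for all $m$" means these requirements hold at every step. For bounded operators this reduces to $\{D,C^{m+1}\}=[\{D,C^m\},C]$ with $[D,C]=DC-CD$. *)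

theory Defs
  imports "HOL-Analysis.Analysis"
begin

class complex_banach = banach +
  fixes scaleC :: "complex \<Rightarrow> 'a \<Rightarrow> 'a" (infixr \<open>*\<^sub>C\<close> 75)
  assumes scaleC_of_real: "scaleC (of_real r) x = scaleR r x"
    and scaleC_add_right: "scaleC c (x + y) = scaleC c x + scaleC c y"
    and scaleC_add_left: "scaleC (c + d) x = scaleC c x + scaleC d x"
    and scaleC_scaleC: "scaleC c (scaleC d x) = scaleC (c * d) x"
    and scaleC_one: "scaleC 1 x = x"
    and norm_scaleC: "norm (scaleC c x) = cmod c * norm x"

text \<open>An operator is a pair of its domain and its action (values outside
  the domain are irrelevant).\<close>

type_synonym 'a op = "'a set \<times> ('a \<Rightarrow> 'a)"

abbreviation dom_op :: "'a op \<Rightarrow> 'a set" where "dom_op A \<equiv> fst A"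
abbreviation app_op :: "'a op \<Rightarrow> 'a \<Rightarrow> 'a" where "app_op A \<equiv> snd A"

definition csubspace :: "'a::complex_banach set \<Rightarrow> bool" where
  "csubspace S \<longleftrightarrow> 0 \<in> S \<and> (\<forall>x\<in>S. \<forall>y\<in>S. x + y \<in> S) \<and> (\<forall>c. \<forall>x\<in>S. c *\<^sub>C x \<in> S)"

definition linear_op :: "'a::complex_banach op \<Rightarrow> bool" where
  "linear_op A \<longleftrightarrow> csubspace (dom_op A) \<and>
     (\<forall>x\<in>dom_op A. \<forall>y\<in>dom_op A. app_op A (x + y) = app_op A x + app_op A y) \<and>
     (\<forall>c. \<forall>x\<in>dom_op A. app_op A (c *\<^sub>C x) = c *\<^sub>C app_op A x)"

definition bounded_clinear_fun :: "('a::complex_banach \<Rightarrow> 'a) \<Rightarrow> bool" where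
  "bounded_clinear_fun f \<longleftrightarrow> (\<forall>x y. f (x + y) = f x + f y) \<and> (\<forall>c x. f (c *\<^sub>C x) = c *\<^sub>C f x)
     \<and> (\<exists>K. \<forall>x. norm (f x) \<le> K * norm x)"

definition graph_op :: "'a op \<Rightarrow> ('a \<times> 'a) set" where
  "graph_op A = {(x, app_op A x) | x. x \<in> dom_op A}"

definition closed_op :: "'a::complex_banach op \<Rightarrow> bool" where
  "closed_op A \<longleftrightarrow> linear_op A \<and> closed (graph_op A)"

definition densely_defined :: "'a::complex_banach op \<Rightarrow> bool" where
  "densely_defined A \<longleftrightarrow> closure (dom_op A) = UNIV"

definition closable_op :: "'a::complex_banach op \<Rightarrow> bool" where
  "closable_op A \<longleftrightarrow> (\<forall>x y z. (x, y) \<in> closure (graph_op A) \<longrightarrow> (x, z) \<in> closure (graph_op A) \<longrightarrow> y = z)"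

definition op_closure :: "'a::complex_banach op \<Rightarrow> 'a op" where
  "op_closure A = ({x. \<exists>y. (x, y) \<in> closure (graph_op A)},
                   \<lambda>x. THE y. (x, y) \<in> closure (graph_op A))"

definition is_resolvent :: "'a::complex_banach op \<Rightarrow> complex \<Rightarrow> ('a \<Rightarrow> 'a) \<Rightarrow> bool" where
  "is_resolvent A z R \<longleftrightarrow> bounded_clinear_fun R \<and>
     (\<forall>x. R x \<in> dom_op A \<and> z *\<^sub>C R x - app_op A (R x) = x) \<and>
     (\<forall>y\<in>dom_op A. R (z *\<^sub>C y - app_op A y) = y)"

definition resolvent_set :: "'a::complex_banach op \<Rightarrow> complex set" where
  "resolvent_set A = {z. \<exists>R. is_resolvent A z R}"

definition resolvent :: "'a::complex_banach op \<Rightarrow> complex \<Rightarrow> 'a \<Rightarrow> 'a" where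
  "resolvent A z = (THE R. is_resolvent A z R)"

definition sector :: "real \<Rightarrow> real \<Rightarrow> complex set" where
  "sector a \<phi> = {z. z \<noteq> complex_of_real a \<and> \<bar>Arg (z - complex_of_real a)\<bar> < \<phi>}"

definition sectorial :: "'a::complex_banach op \<Rightarrow> real \<Rightarrow> real \<Rightarrow> real \<Rightarrow> bool" where
  "sectorial A a \<phi> K \<longleftrightarrow> closed_op A \<and> densely_defined A \<and>
     pi / 2 < \<phi> \<and> \<phi> < pi \<and> K > 0 \<and> sector a \<phi> \<subseteq> resolvent_set A \<and>
     (\<forall>z\<in>sector a \<phi>. \<forall>x. norm (resolvent A z x) \<le> K / cmod (z - complex_of_real a) * norm x)"

definition generates_semigroup :: "'a::complex_banach op \<Rightarrow> (real \<Rightarrow> 'a \<Rightarrow> 'a) \<Rightarrow> bool" where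
  "generates_semigroup A T \<longleftrightarrow>
     (\<forall>t\<ge>0. bounded_clinear_fun (T t)) \<and>
     (\<forall>x. T 0 x = x) \<and>
     (\<forall>s\<ge>0. \<forall>t\<ge>0. \<forall>x. T (s + t) x = T s (T t x)) \<and>
     (\<forall>x. ((\<lambda>t. T t x) \<longlongrightarrow> x) (at_right 0)) \<and>
     dom_op A = {x. \<exists>y. ((\<lambda>h. (1 / h) *\<^sub>R (T h x - x)) \<longlongrightarrow> y) (at_right 0)} \<and>
     (\<forall>x\<in>dom_op A. ((\<lambda>h. (1 / h) *\<^sub>R (T h x - x)) \<longlongrightarrow> app_op A x) (at_right 0))"

definition comm_dom_hat :: "'a::complex_banach op \<Rightarrow> 'a op \<Rightarrow> 'a set" where
  "comm_dom_hat C A = {x \<in> dom_op A \<inter> dom_op C. app_op A x \<in> dom_op C \<and> app_op C x \<in> dom_op A}"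

definition comm_step :: "'a::complex_banach op \<Rightarrow> 'a op \<Rightarrow> 'a op" where
  "comm_step C A = (comm_dom_hat C A, \<lambda>x. app_op C (app_op A x) - app_op A (app_op C x))"

text \<open>nested_comm B A m is {B, A^m}.\<close>
fun nested_comm :: "'a::complex_banach op \<Rightarrow> 'a op \<Rightarrow> nat \<Rightarrow> 'a op" where
  "nested_comm B A 0 = B"
| "nested_comm B A (Suc m) = op_closure (comm_step (nested_comm B A m) A)"

definition nested_comm_defined :: "'a::complex_banach op \<Rightarrow> 'a op \<Rightarrow> bool" where
  "nested_comm_defined B A \<longleftrightarrow>
     (\<forall>m. dom_op A \<subseteq> dom_op (nested_comm B A m) \<and>
          dom_op A \<subseteq> comm_dom_hat (nested_comm B A m) A \<and>
          closable_op (comm_step (nested_comm B A m) A))"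

end

theory Submission
  imports Defs
begin

text \<open>Fix \<open>z\<^sub>0 = a + 1\<close> in the sector and \<open>R = R\<^sub>A(z\<^sub>0)\<close>; by hypothesis the operators
  \<open>D m = {B, A\<^sup>m} R\<close> are bounded with norm at most \<open>K\<^sub>1 \<eta>\<^sup>m\<close>. For \<open>w \<in> D(A)\<close> the functions
  \<open>g m s = T(t - s) (D m (T(s) w))\<close> on \<open>[0, t]\<close> satisfy \<open>g m' = g (m + 1)\<close>, because differentiating
  \<open>T(t - s) C T(s)\<close> in \<open>s\<close> produces the commutator \<open>C A - A C\<close>. Since \<open>g m\<close> grows only
  geometrically in \<open>m\<close>, Taylor's formula gives \<open>g 0 t = \<Sum>m. t\<^sup>m/m! \<cdot> g m 0\<close>, that is
  \<open>B T(t) R w = T(t) (\<Sum>m. t\<^sup>m/m! \<cdot> D m w)\<close>. Both sides are bounded in \<open>w\<close>, so the identity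
  extends from the dense set \<open>D(A)\<close> to all \<open>w\<close>, and \<open>x = R w\<close> then ranges over \<open>D(A)\<close>.
  The bound on \<open>T(s)\<close>, \<open>0 \<le> s \<le> t\<close>, needed for the derivatives comes from the uniform
  boundedness principle.\<close>

lemma bounded_linear_scaleC: "bounded_linear (\<lambda>x::'a::complex_banach. c *\<^sub>C x)"
proof (rule bounded_linear_intro)
  show "c *\<^sub>C (x + y) = c *\<^sub>C x + c *\<^sub>C y" for x y :: 'a
    by (rule scaleC_add_right)
  show "c *\<^sub>C (r *\<^sub>R x) = r *\<^sub>R (c *\<^sub>C x)" for r and x :: 'a
    by (metis scaleC_of_real scaleC_scaleC mult.commute)
  show "norm (c *\<^sub>C x) \<le> norm x * cmod c" for x :: 'a
    by (simp add: norm_scaleC)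
qed

lemma scaleC_diff_right: "c *\<^sub>C (x - y) = c *\<^sub>C x - c *\<^sub>C (y::'a::complex_banach)"
  using linear_diff[OF bounded_linear.linear[OF bounded_linear_scaleC]] .

lemma bounded_clinear_fun_imp_bounded_linear:
  assumes "bounded_clinear_fun f"
  shows "bounded_linear f"
proof -
  from assms obtain K where add: "\<And>x y. f (x + y) = f x + f y"
    and scale: "\<And>c x. f (c *\<^sub>C x) = c *\<^sub>C f x" and K: "\<And>x. norm (f x) \<le> K * norm x"
    unfolding bounded_clinear_fun_def by blast
  show ?thesis
  proof (rule bounded_linear_intro)
    show "f (r *\<^sub>R x) = r *\<^sub>R f x" for r x
      by (metis scale scaleC_of_real)
    show "norm (f x) \<le> norm x * K" for x
      using K[of x] by (simp add: mult.commute)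
  qed (rule add)
qed

lemma linear_norm_le_of_bounded_on_ball:
  assumes lin: "linear f" and r: "r > 0" and small: "\<And>y. norm y < r \<Longrightarrow> norm (f y) \<le> c"
  shows "norm (f x) \<le> (2 * c / r) * norm x"
proof (cases "x = 0")
  case True
  then show ?thesis using linear_0[OF lin] by simp
next
  case False
  define a where "a = r / (2 * norm x)"
  have a: "a > 0" "norm (a *\<^sub>R x) < r" using False r by (simp_all add: a_def)
  then have "a * norm (f x) \<le> c"
    using small[OF a(2)] by (simp add: linear_scale[OF lin])
  then have "norm (f x) \<le> c / a" using a by (simp add: field_simps)
  also have "c / a = (2 * c / r) * norm x" using False r by (simp add: a_def field_simps)
  finally show ?thesis .
qed

lemma uniform_boundedness:
  fixes f :: "nat \<Rightarrow> 'a::banach \<Rightarrow> 'b::real_normed_vector"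
  assumes lin: "\<And>n. bounded_linear (f n)" and pointwise: "\<And>x. \<exists>C. \<forall>n. norm (f n x) \<le> C"
  shows "\<exists>M. \<forall>n x. norm (f n x) \<le> M * norm x"
proof -
  define F where "F k = {x. \<forall>n. norm (f n x) \<le> real k}" for k :: nat
  have closed_F: "closed (F k)" for k
  proof -
    have "closed {x. norm (f n x) \<le> real k}" for n
      by (intro closed_Collect_le continuous_intros linear_continuous_on[OF lin])
    moreover have "F k = (\<Inter>n. {x. norm (f n x) \<le> real k})"
      unfolding F_def by auto
    ultimately show ?thesis by auto
  qed
  have "(\<Union>k. F k) = UNIV"
  proof -
    have "x \<in> (\<Union>k. F k)" for x
    proof -
      obtain C where "\<forall>n. norm (f n x) \<le> C" using pointwise by blast
      moreover obtain k :: nat where "C \<le> real k" using real_arch_simple by blast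
      ultimately show ?thesis unfolding F_def by (auto intro: order_trans)
    qed
    then show ?thesis by blast
  qed
  have "\<exists>k. interior (F k) \<noteq> {}"
  proof (rule ccontr)
    assume "\<not> ?thesis"
    then have "\<And>S. S \<in> range F \<Longrightarrow> closed S \<and> interior S = {}"
      using closed_F by auto
    then have "interior (\<Union>k. F k) = {}"
      using Baire_category_alt[of euclidean "range F"]
      by (simp add: completely_metrizable_space_euclidean)
    with \<open>(\<Union>k. F k) = UNIV\<close> show False by simp
  qed
  then obtain k where "interior (F k) \<noteq> {}" by blast
  then obtain x0 r where r: "r > 0" "ball x0 r \<subseteq> F k"
    by (meson ex_in_conv mem_interior)
  have small: "norm (f n y) \<le> 2 * real k" if "norm y < r" for n y
  proof -
    have "x0 + y \<in> F k" "x0 \<in> F k" using r that by (auto simp: dist_norm)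
    then have "norm (f n (x0 + y)) \<le> real k" "norm (f n x0) \<le> real k" unfolding F_def by auto
    moreover have "f n y = f n (x0 + y) - f n x0"
      by (simp add: linear_add[OF bounded_linear.linear[OF lin]])
    ultimately show ?thesis by (smt (verit) norm_triangle_ineq4)
  qed
  then have "norm (f n x) \<le> (2 * (2 * real k) / r) * norm x" for n x
    using linear_norm_le_of_bounded_on_ball[OF bounded_linear.linear[OF lin] r(1)] by blast
  then show ?thesis by blast
qed

lemma has_vector_derivative_iff_difference_quotient:
  fixes f :: "real \<Rightarrow> 'b::real_normed_vector"
  shows "(f has_vector_derivative D) (at x within S) \<longleftrightarrow>
    ((\<lambda>y. (f y - f x) /\<^sub>R (y - x)) \<longlongrightarrow> D) (at x within S)"
proof -
  have eq: "norm (f y - f x - (y - x) *\<^sub>R D) / norm (y - x) = norm ((f y - f x) /\<^sub>R (y - x) - D)"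
    if "y \<noteq> x" for y
  proof -
    have "(f y - f x) /\<^sub>R (y - x) - D = (1 / (y - x)) *\<^sub>R (f y - f x - (y - x) *\<^sub>R D)"
      using that by (simp add: scaleR_diff_right divide_inverse_commute)
    then show ?thesis by (simp add: divide_inverse_commute)
  qed
  have "((\<lambda>y. norm (f y - f x - (y - x) *\<^sub>R D) / norm (y - x)) \<longlongrightarrow> 0) (at x within S)
     \<longleftrightarrow> ((\<lambda>y. norm ((f y - f x) /\<^sub>R (y - x) - D)) \<longlongrightarrow> 0) (at x within S)"
    by (rule tendsto_cong) (unfold eventually_at_filter, intro always_eventually allI impI eq)
  also have "\<dots> \<longleftrightarrow> ((\<lambda>y. (f y - f x) /\<^sub>R (y - x)) \<longlongrightarrow> D) (at x within S)"
    by (simp add: tendsto_norm_zero_iff LIM_zero_iff)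
  finally show ?thesis
    unfolding has_vector_derivative_def has_derivative_iff_norm
    using bounded_linear_scaleR_left by blast
qed

lemma eventually_mem_at_within: "\<forall>\<^sub>F x in at a within S. x \<in> S \<and> x \<noteq> a"
  by (simp add: eventually_at_filter)

lemma norm_diff_le_of_vector_derivative_bound:
  fixes f :: "real \<Rightarrow> 'a::real_normed_vector"
  assumes "a \<le> b"
    and "\<And>s. s \<in> {a..b} \<Longrightarrow> (f has_vector_derivative f' s) (at s within {a..b})"
    and "\<And>s. s \<in> {a..b} \<Longrightarrow> norm (f' s) \<le> B"
  shows "norm (f b - f a) \<le> B * (b - a)"
  using differentiable_bound[of "{a..b}" f "\<lambda>s h. h *\<^sub>R f' s" B b a] assms
  by (simp add: has_vector_derivative_def onorm_scaleR_left[OF bounded_linear_ident] onorm_id)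

lemma summable_pointwise_of_norm_bound:
  fixes f :: "nat \<Rightarrow> 'a::real_normed_vector \<Rightarrow> 'b::banach"
  assumes "\<And>n x. norm (f n x) \<le> c n * norm x" and "summable c"
  shows "summable (\<lambda>n. f n x)"
  by (rule summable_comparison_test'[OF summable_mult2[OF assms(2), of "norm x"]]) (rule assms(1))

lemma bounded_linear_suminf:
  fixes f :: "nat \<Rightarrow> 'a::real_normed_vector \<Rightarrow> 'b::banach"
  assumes lin: "\<And>n. bounded_linear (f n)"
    and bound: "\<And>n x. norm (f n x) \<le> c n * norm x" and c: "summable c"
  shows "bounded_linear (\<lambda>x. \<Sum>n. f n x)"
proof (rule bounded_linear_intro)
  note summable = summable_pointwise_of_norm_bound[OF bound c]
  show "(\<Sum>n. f n (x + y)) = (\<Sum>n. f n x) + (\<Sum>n. f n y)" for x y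
    by (simp add: suminf_add[OF summable summable] linear_add[OF bounded_linear.linear[OF lin]])
  show "(\<Sum>n. f n (r *\<^sub>R x)) = r *\<^sub>R (\<Sum>n. f n x)" for r x
    by (simp add: suminf_scaleR_right[OF summable] linear_scale[OF bounded_linear.linear[OF lin]])
  show "norm (\<Sum>n. f n x) \<le> norm x * suminf c" for x
  proof -
    have norms: "summable (\<lambda>n. norm (f n x))"
      by (rule summable_comparison_test'[OF summable_mult2[OF c, of "norm x"]]) (simp add: bound)
    have "norm (\<Sum>n. f n x) \<le> (\<Sum>n. norm (f n x))"
      by (rule summable_norm[OF norms])
    also have "\<dots> \<le> (\<Sum>n. c n * norm x)"
      by (intro suminf_le bound norms summable_mult2 c)
    also have "\<dots> = suminf c * norm x"
      by (rule suminf_mult2[OF c, symmetric])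
    finally show ?thesis by (simp add: mult.commute)
  qed
qed

lemma taylor_sum_telescope:
  fixes G :: "nat \<Rightarrow> 'a::real_vector"
  shows "(\<Sum>k\<le>m. (x ^ k / fact k) *\<^sub>R G (Suc k) + (- (real k * x ^ (k - 1) / fact k)) *\<^sub>R G k)
    = (x ^ m / fact m) *\<^sub>R G (Suc m)"
proof (induction m)
  case (Suc m)
  have "real (Suc m) * x ^ (Suc m - 1) / fact (Suc m) = x ^ m / fact m"
    by (simp del: of_nat_Suc)
  with Suc show ?case by (simp add: algebra_simps del: of_nat_Suc)
qed simp

text \<open>In \<open>s\<close>, the sum \<open>\<Sum>k\<le>m. (t - s)\<^sup>k / k! \<cdot> g k s\<close> has derivative \<open>(t - s)\<^sup>m / m! \<cdot> g (m + 1) s\<close>,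
  so its values at \<open>s = t\<close> and \<open>s = 0\<close> differ by at most \<open>t C \<eta> (t \<eta>)\<^sup>m / m!\<close>.\<close>

lemma sums_taylor_of_derivative_chain:
  fixes g :: "nat \<Rightarrow> real \<Rightarrow> 'a::real_normed_vector"
  assumes t: "t \<ge> 0"
    and deriv: "\<And>k s. s \<in> {0..t} \<Longrightarrow> (g k has_vector_derivative g (Suc k) s) (at s within {0..t})"
    and bound: "\<And>k s. s \<in> {0..t} \<Longrightarrow> norm (g k s) \<le> C * \<eta> ^ k"
  shows "(\<lambda>k. (t ^ k / fact k) *\<^sub>R g k 0) sums g 0 t"
proof -
  define F where "F m s = (\<Sum>k\<le>m. ((t - s) ^ k / fact k) *\<^sub>R g k s)" for m s
  have F_deriv: "(F m has_vector_derivative ((t - s) ^ m / fact m) *\<^sub>R g (Suc m) s) (at s within {0..t})"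
    if "s \<in> {0..t}" for m s
  proof -
    have "(F m has_vector_derivative (\<Sum>k\<le>m. ((t - s) ^ k / fact k) *\<^sub>R g (Suc k) s
        + (- (real k * (t - s) ^ (k - 1) / fact k)) *\<^sub>R g k s)) (at s within {0..t})"
      unfolding F_def[abs_def] using that
      by (intro has_vector_derivative_sum has_vector_derivative_scaleR deriv)
        (auto intro!: derivative_eq_intros)
    then show ?thesis using taylor_sum_telescope[of "t - s" "\<lambda>k. g k s" m] by simp
  qed
  have "norm (((t - s) ^ m / fact m) *\<^sub>R g (Suc m) s) \<le> t ^ m / fact m * (C * \<eta> ^ Suc m)"
    if s: "s \<in> {0..t}" for m s
  proof -
    have "0 \<le> (t - s) ^ m / fact m" "(t - s) ^ m / fact m \<le> t ^ m / fact m"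
      using s by (auto intro!: divide_right_mono power_mono)
    then have "(t - s) ^ m / fact m * norm (g (Suc m) s) \<le> t ^ m / fact m * (C * \<eta> ^ Suc m)"
      using bound[OF s, of "Suc m"] by (intro mult_mono) auto
    with s show ?thesis by simp
  qed
  then have "norm (F m t - F m 0) \<le> t ^ m / fact m * (C * \<eta> ^ Suc m) * (t - 0)" for m
    using t by (intro norm_diff_le_of_vector_derivative_bound[OF _ F_deriv]) auto
  then have remainder: "norm (F m t - F m 0) \<le> (t * C * \<eta>) * ((t * \<eta>) ^ m / fact m)" for m
    by (simp add: field_simps)
  have "(\<lambda>m. (t * C * \<eta>) * ((t * \<eta>) ^ m / fact m)) \<longlonglongrightarrow> 0"
    using summable_LIMSEQ_zero[OF summable_exp[of "t * \<eta>"]]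
    by (intro tendsto_mult_right_zero) (simp add: divide_inverse mult.commute)
  then have "(\<lambda>m. F m t - F m 0) \<longlonglongrightarrow> 0"
    by (rule Lim_null_comparison[OF always_eventually, OF allI, OF remainder])
  moreover have "F m t = g 0 t" for m
  proof -
    have "F m t = (\<Sum>k\<le>m. if k = 0 then g 0 t else 0)"
      unfolding F_def by (intro sum.cong) auto
    then show ?thesis by simp
  qed
  ultimately have "(\<lambda>m. g 0 t - (g 0 t - F m 0)) \<longlonglongrightarrow> g 0 t - 0"
    by (intro tendsto_diff tendsto_const) simp
  then show ?thesis unfolding sums_def_le F_def by simp
qed

section \<open>Closures of linear operators\<close>

lemma linear_op_add:
  "linear_op C \<Longrightarrow> x \<in> dom_op C \<Longrightarrow> y \<in> dom_op C \<Longrightarrow>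
    x + y \<in> dom_op C \<and> app_op C (x + y) = app_op C x + app_op C y"
  unfolding linear_op_def csubspace_def by blast

lemma linear_op_scaleC:
  "linear_op C \<Longrightarrow> x \<in> dom_op C \<Longrightarrow> c *\<^sub>C x \<in> dom_op C \<and> app_op C (c *\<^sub>C x) = c *\<^sub>C app_op C x"
  unfolding linear_op_def csubspace_def by blast

lemma linear_op_scaleR:
  "linear_op C \<Longrightarrow> x \<in> dom_op C \<Longrightarrow> r *\<^sub>R x \<in> dom_op C \<and> app_op C (r *\<^sub>R x) = r *\<^sub>R app_op C x"
  using linear_op_scaleC[of C x "of_real r"] by (simp add: scaleC_of_real)

lemma linear_op_zero:
  assumes "linear_op C"
  shows "0 \<in> dom_op C \<and> app_op C 0 = 0"
proof -
  have "0 \<in> dom_op C" using assms unfolding linear_op_def csubspace_def by blast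
  then show ?thesis using linear_op_scaleR[OF assms, of 0 0] by simp
qed

lemma closure_graph_op_add:
  assumes "linear_op C" "p \<in> closure (graph_op C)" "q \<in> closure (graph_op C)"
  shows "p + q \<in> closure (graph_op C)"
proof -
  have "graph_op C + graph_op C \<subseteq> graph_op C"
    using linear_op_add[OF assms(1)] by (auto simp: graph_op_def set_plus_def)
  then have "closure (graph_op C) + closure (graph_op C) \<subseteq> closure (graph_op C)"
    using closure_sum closure_mono by blast
  then show ?thesis using assms(2,3) by auto
qed

lemma closure_graph_op_scaleC:
  assumes "linear_op C" "(x, y) \<in> closure (graph_op C)"
  shows "(c *\<^sub>C x, c *\<^sub>C y) \<in> closure (graph_op C)"
proof -
  let ?f = "\<lambda>p. (c *\<^sub>C fst p, c *\<^sub>C snd p)"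
  have "continuous_on (closure (graph_op C)) ?f"
    by (intro continuous_intros bounded_linear.continuous_on[OF bounded_linear_scaleC])
  moreover have "?f ` graph_op C \<subseteq> closure (graph_op C)"
    using linear_op_scaleC[OF assms(1)] closure_subset by (fastforce simp: graph_op_def)
  ultimately have "?f ` closure (graph_op C) \<subseteq> closure (graph_op C)"
    by (intro image_closure_subset) auto
  then show ?thesis using assms(2) by force
qed

lemma op_closure_eqI:
  assumes "closable_op C" "(x, y) \<in> closure (graph_op C)"
  shows "x \<in> dom_op (op_closure C) \<and> app_op (op_closure C) x = y"
proof -
  have "(THE y. (x, y) \<in> closure (graph_op C)) = y"
    using assms unfolding closable_op_def by (intro the_equality) blast+
  then show ?thesis using assms(2) unfolding op_closure_def by auto
qed

lemma op_closure_in_closure_graph: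
  assumes "closable_op C" "x \<in> dom_op (op_closure C)"
  shows "(x, app_op (op_closure C) x) \<in> closure (graph_op C)"
proof -
  obtain y where "(x, y) \<in> closure (graph_op C)" using assms(2) unfolding op_closure_def by auto
  with op_closure_eqI[OF assms(1) this] show ?thesis by simp
qed

lemma op_closure_extends:
  assumes "closable_op C" "x \<in> dom_op C"
  shows "x \<in> dom_op (op_closure C) \<and> app_op (op_closure C) x = app_op C x"
  using op_closure_eqI[OF assms(1), of x "app_op C x"] assms(2) closure_subset[of "graph_op C"]
  unfolding graph_op_def by blast

lemma linear_op_op_closure:
  assumes lin: "linear_op C" and cl: "closable_op C"
  shows "linear_op (op_closure C)"
proof -
  let ?D = "op_closure C"
  have "x + y \<in> dom_op ?D \<and> app_op ?D (x + y) = app_op ?D x + app_op ?D y"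
    if "x \<in> dom_op ?D" "y \<in> dom_op ?D" for x y
  proof -
    have "(x + y, app_op ?D x + app_op ?D y) \<in> closure (graph_op C)"
      using closure_graph_op_add[OF lin op_closure_in_closure_graph[OF cl that(1)]
          op_closure_in_closure_graph[OF cl that(2)]] by simp
    then show ?thesis by (rule op_closure_eqI[OF cl])
  qed
  moreover have "c *\<^sub>C x \<in> dom_op ?D \<and> app_op ?D (c *\<^sub>C x) = c *\<^sub>C app_op ?D x"
    if "x \<in> dom_op ?D" for x c
    using op_closure_eqI[OF cl closure_graph_op_scaleC[OF lin op_closure_in_closure_graph[OF cl that]]] .
  moreover have "0 \<in> dom_op ?D"
    using op_closure_extends[OF cl] linear_op_zero[OF lin] by blast
  ultimately show ?thesis unfolding linear_op_def csubspace_def by blast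
qed

lemma linear_op_comm_step:
  assumes C: "linear_op C" and A: "linear_op A"
  shows "linear_op (comm_step C A)"
proof -
  have "0 \<in> comm_dom_hat C A"
    using linear_op_zero[OF C] linear_op_zero[OF A] by (simp add: comm_dom_hat_def)
  moreover have "x + y \<in> comm_dom_hat C A \<and>
      app_op (comm_step C A) (x + y) = app_op (comm_step C A) x + app_op (comm_step C A) y"
    if "x \<in> comm_dom_hat C A" "y \<in> comm_dom_hat C A" for x y
    using that linear_op_add[OF C] linear_op_add[OF A]
    by (auto simp: comm_dom_hat_def comm_step_def algebra_simps)
  moreover have "c *\<^sub>C x \<in> comm_dom_hat C A \<and>
      app_op (comm_step C A) (c *\<^sub>C x) = c *\<^sub>C app_op (comm_step C A) x"
    if "x \<in> comm_dom_hat C A" for x c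
    using that linear_op_scaleC[OF C] linear_op_scaleC[OF A]
    by (auto simp: comm_dom_hat_def comm_step_def scaleC_diff_right)
  ultimately show ?thesis unfolding linear_op_def csubspace_def by (simp add: comm_step_def)
qed

section \<open>Strongly continuous semigroups\<close>

locale generated_semigroup =
  fixes A :: "'a::complex_banach op" and T :: "real \<Rightarrow> 'a \<Rightarrow> 'a"
  assumes generates: "generates_semigroup A T"
begin

lemma bounded_clinear_T: "r \<ge> 0 \<Longrightarrow> bounded_clinear_fun (T r)"
  using generates unfolding generates_semigroup_def by blast

lemma bounded_linear_T: "r \<ge> 0 \<Longrightarrow> bounded_linear (T r)"
  using bounded_clinear_T bounded_clinear_fun_imp_bounded_linear by blast

lemma T_add: "s \<ge> 0 \<Longrightarrow> r \<ge> 0 \<Longrightarrow> T (s + r) x = T s (T r x)"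
  using generates unfolding generates_semigroup_def by blast

lemma T_0 [simp]: "T 0 x = x"
  using generates unfolding generates_semigroup_def by blast

lemma dom_generator: "dom_op A = {x. \<exists>y. ((\<lambda>h. (1 / h) *\<^sub>R (T h x - x)) \<longlongrightarrow> y) (at_right 0)}"
  using generates unfolding generates_semigroup_def by blast

lemma generator_tendsto:
  "x \<in> dom_op A \<Longrightarrow> ((\<lambda>h. (1 / h) *\<^sub>R (T h x - x)) \<longlongrightarrow> app_op A x) (at_right 0)"
  using generates unfolding generates_semigroup_def by blast

lemma T_diff: "r \<ge> 0 \<Longrightarrow> T r (x - y) = T r x - T r y"
  using linear_diff[OF bounded_linear.linear[OF bounded_linear_T]] .

lemma T_scaleR: "r \<ge> 0 \<Longrightarrow> T r (c *\<^sub>R x) = c *\<^sub>R T r x"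
  using linear_scale[OF bounded_linear.linear[OF bounded_linear_T]] .

lemma T_scaleC: "r \<ge> 0 \<Longrightarrow> T r (c *\<^sub>C x) = c *\<^sub>C T r x"
  using bounded_clinear_T unfolding bounded_clinear_fun_def by blast

lemma continuous_T_0: "continuous (at 0 within {0..}) (\<lambda>h. T h x)"
  using generates unfolding generates_semigroup_def
  by (simp add: continuous_within at_within_Ici_at_right)

lemma T_bounded_near_0: "\<exists>d>0. \<exists>M. \<forall>h\<in>{0..d}. \<forall>x. norm (T h x) \<le> M * norm x"
proof (rule ccontr)
  assume "\<not> ?thesis"
  then have "\<forall>n::nat. \<exists>h\<in>{0..inverse (real (Suc n))}. \<exists>x. \<not> norm (T h x) \<le> real n * norm x"
    by (metis inverse_positive_iff_positive of_nat_0_less_iff zero_less_Suc)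
  then obtain r x where r: "\<And>n. r n \<in> {0..inverse (real (Suc n))}"
    and x: "\<And>n. \<not> norm (T (r n) (x n)) \<le> real n * norm (x n)"
    by metis
  have "r \<longlonglongrightarrow> 0"
    using r by (intro tendsto_sandwich[OF _ _ tendsto_const LIMSEQ_inverse_real_of_nat]) auto
  \<comment> \<open>strong continuity makes every orbit \<open>T (r n) y\<close> convergent, hence bounded\<close>
  have "\<exists>C. \<forall>n. norm (T (r n) y) \<le> C" for y
  proof -
    have "(\<lambda>n. T (r n) y) \<longlonglongrightarrow> T 0 y"
      using r \<open>r \<longlonglongrightarrow> 0\<close> by (intro continuous_within_tendsto_compose'[OF continuous_T_0]) auto
    then have "Bseq (\<lambda>n. T (r n) y)" by (intro convergent_imp_Bseq convergentI)
    then show ?thesis by (auto simp: Bseq_def)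
  qed
  then obtain M where M: "\<And>n y. norm (T (r n) y) \<le> M * norm y"
    using uniform_boundedness[of "\<lambda>n. T (r n)"] bounded_linear_T r by force
  obtain n :: nat where "M \<le> real n" using real_arch_simple by blast
  then have "M * norm (x n) \<le> real n * norm (x n)" by (simp add: mult_right_mono)
  with x[of n] M[of n "x n"] show False by simp
qed

lemma T_locally_bounded:
  assumes "t \<ge> 0"
  shows "\<exists>M\<ge>1. \<forall>r\<in>{0..t}. \<forall>x. norm (T r x) \<le> M * norm x"
proof -
  obtain d M0 where d: "d > 0" and M0: "\<And>h x. h \<in> {0..d} \<Longrightarrow> norm (T h x) \<le> M0 * norm x"
    using T_bounded_near_0 by blast
  define M where "M = max 1 M0"
  have M: "M \<ge> 1" "\<And>h x. h \<in> {0..d} \<Longrightarrow> norm (T h x) \<le> M * norm x"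
    using M0 order_trans[OF M0 mult_right_mono[of M0 M]] by (auto simp: M_def)
  have "\<forall>r\<in>{0..real n * d}. \<forall>x. norm (T r x) \<le> M ^ n * norm x" for n
  proof (induction n)
    case 0
    then show ?case by simp
  next
    case (Suc n)
    show ?case
    proof (intro ballI allI)
      fix r x assume r: "r \<in> {0..real (Suc n) * d}"
      show "norm (T r x) \<le> M ^ Suc n * norm x"
      proof (cases "r \<le> d")
        case True
        then have "norm (T r x) \<le> M * norm x" using M r by simp
        also have "\<dots> \<le> M ^ Suc n * norm x"
          using M by (intro mult_right_mono) (auto simp: power_increasing[of 1 "Suc n" M, simplified])
        finally show ?thesis .
      next
        case False
        then have rd: "r - d \<in> {0..real n * d}" using r by (auto simp: algebra_simps)
        have "T r x = T d (T (r - d) x)" using T_add[of d "r - d" x] False d by simp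
        then have "norm (T r x) \<le> M * norm (T (r - d) x)" using M d by simp
        also have "\<dots> \<le> M * (M ^ n * norm x)"
          using Suc.IH rd M by (intro mult_left_mono) auto
        finally show ?thesis by simp
      qed
    qed
  qed
  moreover obtain n :: nat where "t / d \<le> real n" using real_arch_simple by blast
  then have "{0..t} \<subseteq> {0..real n * d}" using d by (auto simp: field_simps)
  ultimately show ?thesis using M(1) one_le_power[OF M(1), of n] by blast
qed

lemma T_dom_commute:
  assumes y: "y \<in> dom_op A" and r: "r \<ge> 0"
  shows "T r y \<in> dom_op A \<and> app_op A (T r y) = T r (app_op A y)"
proof -
  have "T r ((1 / h) *\<^sub>R (T h y - y)) = (1 / h) *\<^sub>R (T h (T r y) - T r y)" if "h > 0" for h
    using T_add[of h r y] T_add[of r h y] that r by (simp add: add.commute T_scaleR T_diff)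
  then have "\<forall>\<^sub>F h in at_right 0. T r ((1 / h) *\<^sub>R (T h y - y)) = (1 / h) *\<^sub>R (T h (T r y) - T r y)"
    by (auto simp: eventually_at_right_field intro: exI[of _ 1])
  moreover have "((\<lambda>h. T r ((1 / h) *\<^sub>R (T h y - y))) \<longlongrightarrow> T r (app_op A y)) (at_right 0)"
    using bounded_linear.tendsto[OF bounded_linear_T[OF r] generator_tendsto[OF y]] .
  ultimately have lim: "((\<lambda>h. (1 / h) *\<^sub>R (T h (T r y) - T r y)) \<longlongrightarrow> T r (app_op A y)) (at_right 0)"
    by (rule Lim_transform_eventually[rotated])
  then have dom: "T r y \<in> dom_op A" using dom_generator by blast
  have "app_op A (T r y) = T r (app_op A y)"
    using tendsto_unique[OF _ generator_tendsto[OF dom] lim] by simp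
  with dom show ?thesis by blast
qed

lemma T_max_eq_T_min:
  "r \<ge> 0 \<Longrightarrow> s \<ge> 0 \<Longrightarrow> T (max r s) y = T (min r s) (T \<bar>s - r\<bar> y)"
  using T_add[of "min r s" "\<bar>s - r\<bar>" y] by (cases "r \<le> s") (simp_all add: max_def min_def)

lemma T_difference_quotient:
  assumes "r \<ge> 0" "s \<ge> 0"
  shows "(T s y - T r y) /\<^sub>R (s - r) = T (min r s) ((1 / \<bar>s - r\<bar>) *\<^sub>R (T \<bar>s - r\<bar> y - y))"
proof -
  have "(T s y - T r y) /\<^sub>R (s - r) = (T (max r s) y - T (min r s) y) /\<^sub>R \<bar>s - r\<bar>"
  proof (cases "r \<le> s")
    case False
    then have "(T s y - T r y) /\<^sub>R (s - r) = (- (T r y - T s y)) /\<^sub>R (- (r - s))" by simp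
    with False show ?thesis by (simp only: scaleR_minus_left scaleR_minus_right inverse_minus_eq) simp
  qed simp
  then show ?thesis
    using assms by (simp add: T_max_eq_T_min T_diff T_scaleR divide_inverse_commute)
qed

context
  fixes t M :: real
  assumes bound: "\<And>r x. r \<in> {0..t} \<Longrightarrow> norm (T r x) \<le> M * norm x"
begin

lemma continuous_T_within:
  assumes r: "r \<in> {0..t}"
  shows "continuous (at r within {0..t}) (\<lambda>s. T s y)"
proof -
  have bnd: "norm (T s y - T r y) \<le> M * norm (T \<bar>s - r\<bar> y - y)" if s: "s \<in> {0..t}" for s
  proof -
    have "norm (T s y - T r y) = norm (T (max r s) y - T (min r s) y)"
      by (cases "r \<le> s") (simp_all add: max_def min_def norm_minus_commute)
    also have "\<dots> = norm (T (min r s) (T \<bar>s - r\<bar> y - y))"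
      using r s by (simp add: T_max_eq_T_min T_diff)
    also have "\<dots> \<le> M * norm (T \<bar>s - r\<bar> y - y)"
      using r s by (intro bound) auto
    finally show ?thesis .
  qed
  have "((\<lambda>s. \<bar>s - r\<bar>) \<longlongrightarrow> 0) (at r within {0..t})"
    by (auto intro!: tendsto_eq_intros)
  then have "((\<lambda>s. T \<bar>s - r\<bar> y) \<longlongrightarrow> T 0 y) (at r within {0..t})"
    by (rule continuous_within_tendsto_compose'[OF continuous_T_0, rotated]) auto
  then have "((\<lambda>s. M * norm (T \<bar>s - r\<bar> y - y)) \<longlongrightarrow> 0) (at r within {0..t})"
    by (intro tendsto_mult_right_zero tendsto_norm_zero) (simp add: LIM_zero)
  moreover have "\<forall>\<^sub>F s in at r within {0..t}. norm (T s y - T r y) \<le> M * norm (T \<bar>s - r\<bar> y - y)"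
    using eventually_mem_at_within by (rule eventually_mono) (simp add: bnd)
  ultimately have "((\<lambda>s. T s y - T r y) \<longlongrightarrow> 0) (at r within {0..t})"
    by (rule Lim_null_comparison[rotated])
  then show ?thesis by (simp add: continuous_within LIM_zero_iff)
qed

lemma T_has_vector_derivative:
  assumes r: "r \<in> {0..t}" and y: "y \<in> dom_op A"
  shows "((\<lambda>s. T s y) has_vector_derivative T r (app_op A y)) (at r within {0..t})"
proof -
  define q where "q h = (1 / h) *\<^sub>R (T h y - y)" for h
  let ?Ay = "app_op A y"
  have quotient: "(T s y - T r y) /\<^sub>R (s - r) = T (min r s) (q \<bar>s - r\<bar>)"
    if "s \<in> {0..t}" for s
    unfolding q_def using r that by (intro T_difference_quotient) auto
  have "filterlim (\<lambda>s. \<bar>s - r\<bar>) (at_right 0) (at r within {0..t})"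
    unfolding filterlim_at
  proof
    show "\<forall>\<^sub>F s in at r within {0..t}. \<bar>s - r\<bar> \<in> {0<..} \<and> \<bar>s - r\<bar> \<noteq> 0"
      using eventually_mem_at_within by (rule eventually_mono) auto
  qed (auto intro!: tendsto_eq_intros)
  then have "((\<lambda>s. q \<bar>s - r\<bar>) \<longlongrightarrow> ?Ay) (at r within {0..t})"
    unfolding q_def by (rule filterlim_compose[OF generator_tendsto[OF y]])
  then have "((\<lambda>s. q \<bar>s - r\<bar> - ?Ay) \<longlongrightarrow> 0) (at r within {0..t})"
    by (rule LIM_zero)
  then have "((\<lambda>s. T (min r s) (q \<bar>s - r\<bar> - ?Ay)) \<longlongrightarrow> 0) (at r within {0..t})"
  proof (rule Lim_null_comparison[rotated, OF tendsto_mult_right_zero[OF tendsto_norm_zero]])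
    show "\<forall>\<^sub>F s in at r within {0..t}.
        norm (T (min r s) (q \<bar>s - r\<bar> - ?Ay)) \<le> M * norm (q \<bar>s - r\<bar> - ?Ay)"
      using eventually_mem_at_within by (rule eventually_mono) (use r in \<open>auto intro!: bound\<close>)
  qed
  moreover have "\<forall>\<^sub>F s in at r within {0..t}. min r s \<in> {0..t}"
    using eventually_mem_at_within by (rule eventually_mono) (use r in auto)
  then have "((\<lambda>s. T (min r s) ?Ay) \<longlongrightarrow> T r ?Ay) (at r within {0..t})"
    by (rule continuous_within_tendsto_compose[OF continuous_T_within[OF r]])
      (auto intro!: tendsto_eq_intros)
  ultimately have "((\<lambda>s. T (min r s) (q \<bar>s - r\<bar> - ?Ay) + T (min r s) ?Ay)
      \<longlongrightarrow> 0 + T r ?Ay) (at r within {0..t})"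
    by (intro tendsto_add) auto
  moreover have "\<forall>\<^sub>F s in at r within {0..t}.
      T (min r s) (q \<bar>s - r\<bar> - ?Ay) + T (min r s) ?Ay = (T s y - T r y) /\<^sub>R (s - r)"
    using eventually_mem_at_within by (rule eventually_mono) (use r in \<open>auto simp: quotient T_diff\<close>)
  ultimately show ?thesis
    unfolding has_vector_derivative_iff_difference_quotient
    by (auto intro: Lim_transform_eventually)
qed

lemma T_reverse_has_vector_derivative:
  assumes s: "s \<in> {0..t}" and z: "z \<in> dom_op A"
  shows "((\<lambda>u. T (t - u) z) has_vector_derivative - T (t - s) (app_op A z)) (at s within {0..t})"
proof -
  have "((\<lambda>r. T r z) has_vector_derivative T (t - s) (app_op A z))
      (at (t - s) within (\<lambda>u. t - u) ` {0..t})"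
    using T_has_vector_derivative[OF _ z, of "t - s"] s by simp
  moreover have "((\<lambda>u. t - u) has_vector_derivative -1) (at s within {0..t})"
    by (auto intro!: derivative_eq_intros simp: has_real_derivative_iff_has_vector_derivative[symmetric])
  ultimately show ?thesis
    using vector_diff_chain_within[of "\<lambda>u. t - u" "-1" s "{0..t}"] by (simp add: o_def)
qed

lemma T_reverse_product_rule:
  assumes s: "s \<in> {0..t}"
    and p: "(p has_vector_derivative p') (at s within {0..t})" and p_dom: "p s \<in> dom_op A"
  shows "((\<lambda>u. T (t - u) (p u)) has_vector_derivative T (t - s) p' - T (t - s) (app_op A (p s)))
    (at s within {0..t})"
proof -
  let ?F = "at s within {0..t}"
  let ?dp = "\<lambda>u. (p u - p s) /\<^sub>R (u - s)"
  have "continuous ?F (\<lambda>u. t - u)"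
    by (intro continuous_intros)
  then have "continuous ?F (\<lambda>u. T (t - u) p')"
    using s by (intro continuous_within_compose2[OF _ continuous_within_subset[OF continuous_T_within]])
      auto
  then have "((\<lambda>u. T (t - u) p') \<longlongrightarrow> T (t - s) p') ?F"
    by (simp add: continuous_within)
  moreover have "((\<lambda>u. T (t - u) (?dp u - p')) \<longlongrightarrow> 0) ?F"
  proof (rule Lim_null_comparison)
    show "\<forall>\<^sub>F u in ?F. norm (T (t - u) (?dp u - p')) \<le> M * norm (?dp u - p')"
      using eventually_mem_at_within by (rule eventually_mono) (auto intro!: bound)
    show "((\<lambda>u. M * norm (?dp u - p')) \<longlongrightarrow> 0) ?F"
      using p unfolding has_vector_derivative_iff_difference_quotient
      by (intro tendsto_mult_right_zero tendsto_norm_zero) (rule LIM_zero)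
  qed
  ultimately have "((\<lambda>u. T (t - u) (?dp u - p') + T (t - u) p') \<longlongrightarrow> 0 + T (t - s) p') ?F"
    by (intro tendsto_add)
  moreover have "((\<lambda>u. (T (t - u) (p s) - T (t - s) (p s)) /\<^sub>R (u - s))
      \<longlongrightarrow> - T (t - s) (app_op A (p s))) ?F"
    using T_reverse_has_vector_derivative[OF s p_dom]
    unfolding has_vector_derivative_iff_difference_quotient .
  ultimately have "((\<lambda>u. (T (t - u) (?dp u - p') + T (t - u) p')
      + (T (t - u) (p s) - T (t - s) (p s)) /\<^sub>R (u - s))
      \<longlongrightarrow> 0 + T (t - s) p' + - T (t - s) (app_op A (p s))) ?F"
    by (rule tendsto_add)
  moreover have "\<forall>\<^sub>F u in ?F. (T (t - u) (?dp u - p') + T (t - u) p')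
      + (T (t - u) (p s) - T (t - s) (p s)) /\<^sub>R (u - s)
      = (T (t - u) (p u) - T (t - s) (p s)) /\<^sub>R (u - s)"
    using eventually_mem_at_within
    by (rule eventually_mono) (auto simp: T_diff T_scaleR scaleR_diff_right)
  ultimately show ?thesis
    unfolding has_vector_derivative_iff_difference_quotient
    by (auto intro: Lim_transform_eventually)
qed

end

end

section \<open>The commutator expansion\<close>

lemma resolvent_unique:
  assumes "is_resolvent A z R1" "is_resolvent A z R2"
  shows "R1 = R2"
proof
  fix x
  have "R2 x \<in> dom_op A" "z *\<^sub>C R2 x - app_op A (R2 x) = x"
    using assms(2) unfolding is_resolvent_def by auto
  then show "R1 x = R2 x" using assms(1) unfolding is_resolvent_def by metis
qed

lemma is_resolvent_resolvent:
  assumes "z \<in> resolvent_set A"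
  shows "is_resolvent A z (resolvent A z)"
proof -
  obtain R where R: "is_resolvent A z R" using assms unfolding resolvent_set_def by blast
  then have "resolvent A z = R"
    unfolding resolvent_def using resolvent_unique by blast
  with R show ?thesis by simp
qed

locale nested_commutator_bound = generated_semigroup A T
  for A :: "'a::complex_banach op" and T +
  fixes B :: "'a op" and z0 :: complex and R :: "'a \<Rightarrow> 'a" and K \<eta> :: real
  assumes linear_A: "linear_op A" and dense_A: "densely_defined A"
    and resolvent_R: "is_resolvent A z0 R"
    and linear_B: "linear_op B"
    and comm_defined: "nested_comm_defined B A"
    and comm_resolvent_bound: "\<And>m w. norm (app_op (nested_comm B A m) (R w)) \<le> K * \<eta> ^ m * norm w"
begin

abbreviation C :: "nat \<Rightarrow> 'a op" where "C m \<equiv> nested_comm B A m"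

definition comm_res :: "nat \<Rightarrow> 'a \<Rightarrow> 'a" where
  "comm_res m w = app_op (C m) (R w)"

lemma R_mem_dom: "R x \<in> dom_op A"
  and R_right_inverse: "z0 *\<^sub>C R x - app_op A (R x) = x"
  and R_left_inverse: "y \<in> dom_op A \<Longrightarrow> R (z0 *\<^sub>C y - app_op A y) = y"
  and bounded_clinear_R: "bounded_clinear_fun R"
  using resolvent_R unfolding is_resolvent_def by auto

lemma bounded_linear_R: "bounded_linear R"
  by (rule bounded_clinear_fun_imp_bounded_linear[OF bounded_clinear_R])

lemma R_diff: "R (u - v) = R u - R v"
  using linear_diff[OF bounded_linear.linear[OF bounded_linear_R]] .

lemma R_scaleC: "R (c *\<^sub>C u) = c *\<^sub>C R u"
  using bounded_clinear_R unfolding bounded_clinear_fun_def by blast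

lemma T_R_commute:
  assumes r: "r \<ge> 0"
  shows "T r (R u) = R (T r u)"
proof -
  have dom: "T r (R u) \<in> dom_op A" and "app_op A (T r (R u)) = T r (app_op A (R u))"
    using T_dom_commute[OF R_mem_dom r] by auto
  then have "z0 *\<^sub>C T r (R u) - app_op A (T r (R u)) = T r (z0 *\<^sub>C R u - app_op A (R u))"
    using r by (simp add: T_scaleC T_diff)
  also have "\<dots> = T r u" by (simp add: R_right_inverse)
  finally have "z0 *\<^sub>C T r (R u) - app_op A (T r (R u)) = T r u" .
  then show ?thesis using R_left_inverse[OF dom] by simp
qed

lemma R_A_commute:
  assumes w: "w \<in> dom_op A"
  shows "R (app_op A w) = app_op A (R w)"
proof -
  have "R (app_op A w) = z0 *\<^sub>C R w - R (z0 *\<^sub>C w - app_op A w)"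
    by (simp add: R_diff[symmetric] R_scaleC[symmetric])
  also have "\<dots> = app_op A (R w)"
    using R_left_inverse[OF w] R_right_inverse[of w] by (metis diff_add_cancel add_diff_cancel_left')
  finally show ?thesis .
qed

lemma linear_op_C: "linear_op (C k)"
proof (induction k)
  case (Suc k)
  have "closable_op (comm_step (C k) A)"
    using comm_defined unfolding nested_comm_defined_def by blast
  with Suc show ?case by (simp add: linear_op_op_closure linear_op_comm_step linear_A)
qed (simp add: linear_B)

lemma C_dom:
  assumes "x \<in> dom_op A"
  shows "x \<in> dom_op (C k)" "app_op (C k) x \<in> dom_op A"
  using assms comm_defined unfolding nested_comm_defined_def comm_dom_hat_def by blast+

lemma C_Suc:
  assumes x: "x \<in> dom_op A"
  shows "app_op (C (Suc k)) x = app_op (C k) (app_op A x) - app_op A (app_op (C k) x)"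
proof -
  have "closable_op (comm_step (C k) A)" "x \<in> dom_op (comm_step (C k) A)"
    using x comm_defined unfolding nested_comm_defined_def comm_step_def by auto
  then have "app_op (op_closure (comm_step (C k) A)) x = app_op (comm_step (C k) A) x"
    by (rule op_closure_extends[THEN conjunct2])
  then show ?thesis by (simp add: comm_step_def)
qed

lemma norm_comm_res: "norm (comm_res k u) \<le> K * \<eta> ^ k * norm u"
  unfolding comm_res_def by (rule comm_resolvent_bound)

lemma bounded_linear_comm_res: "bounded_linear (comm_res k)"
proof (rule bounded_linear_intro)
  show "comm_res k (u + v) = comm_res k u + comm_res k v" for u v
    using linear_op_add[OF linear_op_C C_dom(1)[OF R_mem_dom] C_dom(1)[OF R_mem_dom]]
    by (simp add: comm_res_def linear_add[OF bounded_linear.linear[OF bounded_linear_R]])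
  show "comm_res k (c *\<^sub>R u) = c *\<^sub>R comm_res k u" for c u
    using linear_op_scaleR[OF linear_op_C C_dom(1)[OF R_mem_dom]]
    by (simp add: comm_res_def linear_scale[OF bounded_linear.linear[OF bounded_linear_R]])
  show "norm (comm_res k u) \<le> norm u * (K * \<eta> ^ k)" for u
    using norm_comm_res[of k u] by (simp add: mult.commute)
qed

lemma C_eq_comm_res: "x \<in> dom_op A \<Longrightarrow> app_op (C k) x = comm_res k (z0 *\<^sub>C x - app_op A x)"
  unfolding comm_res_def by (simp add: R_left_inverse)

lemma norm_comm_res_series_term:
  assumes "t \<ge> 0"
  shows "norm ((t ^ m / fact m) *\<^sub>R comm_res m w) \<le> K * (inverse (fact m) * (t * \<eta>) ^ m) * norm w"
proof -
  have "norm ((t ^ m / fact m) *\<^sub>R comm_res m w) = t ^ m / fact m * norm (comm_res m w)"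
    using assms by simp
  also have "\<dots> \<le> t ^ m / fact m * (K * \<eta> ^ m * norm w)"
    using assms by (intro mult_left_mono norm_comm_res) auto
  also have "\<dots> = K * (inverse (fact m) * (t * \<eta>) ^ m) * norm w"
    by (simp add: field_simps)
  finally show ?thesis .
qed

lemma summable_comm_res_series:
  "t \<ge> 0 \<Longrightarrow> summable (\<lambda>m. (t ^ m / fact m) *\<^sub>R comm_res m w)"
  by (rule summable_pointwise_of_norm_bound[OF norm_comm_res_series_term summable_mult[OF summable_exp]])

lemma bounded_linear_comm_res_series:
  "t \<ge> 0 \<Longrightarrow> bounded_linear (\<lambda>w. \<Sum>m. (t ^ m / fact m) *\<^sub>R comm_res m w)"
  by (rule bounded_linear_suminf[OF bounded_linear_compose[OF bounded_linear_scaleR_right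
        bounded_linear_comm_res] norm_comm_res_series_term summable_mult[OF summable_exp]])

lemma has_vector_derivative_comm_res_conjugate:
  assumes bound: "\<And>r x. r \<in> {0..t} \<Longrightarrow> norm (T r x) \<le> M * norm x"
    and s: "s \<in> {0..t}" and w: "w \<in> dom_op A"
  shows "((\<lambda>s. T (t - s) (comm_res k (T s w))) has_vector_derivative
      T (t - s) (comm_res (Suc k) (T s w))) (at s within {0..t})"
proof -
  define x where "x = R w"
  have s0: "s \<ge> 0" using s by simp
  have x_dom: "T s x \<in> dom_op A" using T_dom_commute[OF R_mem_dom s0] by (simp add: x_def)
  have comm_res_T: "comm_res j (T s w) = app_op (C j) (T s x)" for j
    by (simp add: comm_res_def x_def T_R_commute[OF s0])
  have "comm_res k (T s (app_op A w)) = app_op (C k) (T s (R (app_op A w)))"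
    by (simp add: comm_res_def T_R_commute[OF s0])
  also have "\<dots> = app_op (C k) (app_op A (T s x))"
    using T_dom_commute[OF R_mem_dom s0] by (simp add: R_A_commute[OF w] x_def)
  finally have eq: "comm_res k (T s (app_op A w)) = app_op (C k) (app_op A (T s x))" .
  have "((\<lambda>s. T s w) has_vector_derivative T s (app_op A w)) (at s within {0..t})"
    by (rule T_has_vector_derivative[OF bound s w])
  then have deriv: "((\<lambda>s. comm_res k (T s w)) has_vector_derivative
      app_op (C k) (app_op A (T s x))) (at s within {0..t})"
    unfolding eq[symmetric] by (rule bounded_linear.has_vector_derivative[OF bounded_linear_comm_res])
  have dom: "comm_res k (T s w) \<in> dom_op A"
    using C_dom(2)[OF x_dom] by (simp add: comm_res_T)
  have "T (t - s) (app_op (C k) (app_op A (T s x))) - T (t - s) (app_op A (comm_res k (T s w)))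
      = T (t - s) (comm_res (Suc k) (T s w))"
    using s by (simp add: comm_res_T C_Suc[OF x_dom] T_diff del: nested_comm.simps)
  with T_reverse_product_rule[OF bound s deriv dom] show ?thesis by simp
qed

lemma comm_res_T_expansion_on_dom:
  assumes t: "t \<ge> 0" and w: "w \<in> dom_op A"
  shows "comm_res 0 (T t w) = T t (\<Sum>m. (t ^ m / fact m) *\<^sub>R comm_res m w)"
proof -
  obtain M where M: "M \<ge> 1" and bound: "\<And>r x. r \<in> {0..t} \<Longrightarrow> norm (T r x) \<le> M * norm x"
    using T_locally_bounded[OF t] by blast
  define g where "g = (\<lambda>k s. T (t - s) (comm_res k (T s w)))"
  have "norm (g k s) \<le> (M * \<bar>K\<bar> * M * norm w) * \<bar>\<eta>\<bar> ^ k" if s: "s \<in> {0..t}" for k s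
  proof -
    have "norm (g k s) \<le> M * norm (comm_res k (T s w))"
      unfolding g_def using s by (intro bound) auto
    also have "\<dots> \<le> M * (\<bar>K\<bar> * \<bar>\<eta>\<bar> ^ k * norm (T s w))"
    proof (rule mult_left_mono)
      have "K * \<eta> ^ k \<le> \<bar>K\<bar> * \<bar>\<eta>\<bar> ^ k" by (metis abs_ge_self abs_mult power_abs)
      then show "norm (comm_res k (T s w)) \<le> \<bar>K\<bar> * \<bar>\<eta>\<bar> ^ k * norm (T s w)"
        by (rule order_trans[OF norm_comm_res mult_right_mono]) simp
    qed (use M in simp)
    also have "\<dots> \<le> M * (\<bar>K\<bar> * \<bar>\<eta>\<bar> ^ k * (M * norm w))"
      using M bound[OF s] by (intro mult_left_mono) auto
    finally show ?thesis by (simp add: ac_simps)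
  qed
  moreover have "(g k has_vector_derivative g (Suc k) s) (at s within {0..t})" if "s \<in> {0..t}" for k s
    unfolding g_def using has_vector_derivative_comm_res_conjugate[OF bound that w] by simp
  ultimately have "(\<lambda>k. (t ^ k / fact k) *\<^sub>R g k 0) sums g 0 t"
    by (intro sums_taylor_of_derivative_chain[OF t])
  then have "(\<lambda>k. T t ((t ^ k / fact k) *\<^sub>R comm_res k w)) sums comm_res 0 (T t w)"
    using t by (simp add: g_def T_scaleR)
  moreover have "(\<lambda>k. T t ((t ^ k / fact k) *\<^sub>R comm_res k w))
      sums T t (\<Sum>m. (t ^ m / fact m) *\<^sub>R comm_res m w)"
    using t by (intro bounded_linear.sums[OF bounded_linear_T] summable_sums summable_comm_res_series)
  ultimately show ?thesis by (rule sums_unique2)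
qed

lemma comm_res_T_expansion:
  assumes t: "t \<ge> 0"
  shows "comm_res 0 (T t w) = T t (\<Sum>m. (t ^ m / fact m) *\<^sub>R comm_res m w)"
proof -
  let ?f = "\<lambda>w. comm_res 0 (T t w) - T t (\<Sum>m. (t ^ m / fact m) *\<^sub>R comm_res m w)"
  have "bounded_linear ?f"
    using t by (intro bounded_linear_sub bounded_linear_compose[OF bounded_linear_comm_res]
        bounded_linear_compose[OF bounded_linear_T] bounded_linear_T bounded_linear_comm_res_series)
  then have "continuous_on (closure (dom_op A)) ?f"
    by (rule linear_continuous_on)
  moreover have "w \<in> closure (dom_op A)"
    using dense_A by (simp add: densely_defined_def)
  ultimately show ?thesis
    using continuous_constant_on_closure[of "dom_op A" ?f 0 w] comm_res_T_expansion_on_dom[OF t]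
    by simp
qed

lemma B_T_expansion:
  assumes t: "t \<ge> 0" and x: "x \<in> dom_op A"
  shows "summable (\<lambda>m. (t ^ m / fact m) *\<^sub>R app_op (C m) x)"
    and "app_op B (T t x) = T t (\<Sum>m. (t ^ m / fact m) *\<^sub>R app_op (C m) x)"
proof -
  define w where "w = z0 *\<^sub>C x - app_op A x"
  have C_x: "app_op (C m) x = comm_res m w" for m
    using C_eq_comm_res[OF x] by (simp add: w_def)
  show "summable (\<lambda>m. (t ^ m / fact m) *\<^sub>R app_op (C m) x)"
    using summable_comm_res_series[OF t] by (simp add: C_x)
  have "x = R w" using R_left_inverse[OF x] by (simp add: w_def)
  then have "app_op B (T t x) = comm_res 0 (T t w)"
    by (simp add: comm_res_def T_R_commute[OF t])
  then show "app_op B (T t x) = T t (\<Sum>m. (t ^ m / fact m) *\<^sub>R app_op (C m) x)"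
    using comm_res_T_expansion[OF t] by (simp add: C_x)
qed

end

text \<open>Nor are the signs of \<open>\<eta>\<close> and \<open>K1\<close>.\<close>

theorem lemma1:
  fixes A B :: "'a::complex_banach op" and T :: "real \<Rightarrow> 'a \<Rightarrow> 'a"
    and a \<phi> K \<eta> K1 :: real
  assumes sect: "sectorial A a \<phi> K"
    and gen: "generates_semigroup A T"
    and B_closed: "closed_op B"
    and domAB: "dom_op A \<subseteq> dom_op B"
    and B_inv: "app_op B ` dom_op A \<subseteq> dom_op A"
    and comm_def: "nested_comm_defined B A"
    and comm_inv: "\<forall>m. app_op (nested_comm B A m) ` dom_op A \<subseteq> dom_op A"
    and eta: "\<eta> > 0" and K1: "K1 > 0"
    and bound: "\<forall>m. \<forall>z\<in>sector a \<phi>. \<forall>x.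
        norm (app_op (nested_comm B A m) (resolvent A z x))
          \<le> K1 * \<eta> ^ m / cmod (z - complex_of_real a) * norm x"
  shows "\<forall>t>0. \<forall>x\<in>dom_op A.
     summable (\<lambda>m. (t ^ m / fact m) *\<^sub>R app_op (nested_comm B A m) x) \<and>
     T t x \<in> dom_op B \<and>
     app_op B (T t x) = T t (\<Sum>m. (t ^ m / fact m) *\<^sub>R app_op (nested_comm B A m) x)"
proof -
  define z0 where "z0 = complex_of_real (a + 1)"
  have "z0 \<in> sector a \<phi>" "z0 - complex_of_real a = 1"
    using sect pi_gt_zero by (auto simp: sectorial_def sector_def z0_def)
  then interpret nested_commutator_bound A T B z0 "resolvent A z0" K1 \<eta>
    using sect gen B_closed comm_def bound
    by unfold_locales (force simp: sectorial_def closed_op_def is_resolvent_resolvent)+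
  show ?thesis
    using B_T_expansion T_dom_commute domAB by (meson less_imp_le subsetD)
qed

end
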